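(* Let $G^1$ be a 1-wconnected 1-graph and let $d$ be the wdistance. For all maximal nodes $x,y,z$ of $G^1$: (i) $d(x,y)$ is an ordinal with $d(x,y)<\omega^2$; (ii) $d(x,y)=0$ if and only if $x=y$; (iii) $d(x,y)=d(y,x)$; (iv) $d(x,z)\le d(x,y)\oplus d(y,z)$, where $\oplus$ is the natural (Hessenberg) sum of ordinals.
   Context: 1-graphs. Let $G^0=\{X^0,B\}$ be a graph whose nodes are called 0-nodes and whose branches are two-element sets of 0-nodes. A 0-tip is an equivalence class of one-ended paths in $G^0$, two being equivalent if they are eventually identical. The 0-tips are partitioned into subsets. To some subsets a single 0-node is adjoined, each 0-node being adjoined to at most one subset. The resulting sets are the 1-nodes, $X^1$ is their set, and $G^1=\{X^0,B,X^1\}$ is a 1-graph. A node of $G^1$ is a 0-node or a 1-node. A 0-node is maximal if it is contained in no 1-node; every 1-node is maximal. 0-walks. A 0-walk is a conventional walk in $G^0$, finite, one-way infinite or two-way infinite, terminating at 0-nodes on any terminating side. It is extended if on each infinite side it is eventually identical to a one-ended path. It reaches a 1-node $x^1$ through a 0-tip if on some infinite side it is eventually identical to a representative of a 0-tip contained in $x^1$. It reaches $x^1$ through a branch if it terminates at a 0-node contained in $x^1$. 1-walks. A nontrivial two-ended 1-walk is a sequence $\langle x_0,W_0^0,x_1^1,W_1^0,\dots,x_{m-1}^1,W_{m-1}^0,x_m\rangle$ with $m\ge 1$ satisfying: - $x_1^1,\dots,x_{m-1}^1$ are 1-nodes, and $x_0,x_m$ are 0-nodes or 1-nodes; - each $W_k^0$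 is a nontrivial 0-walk reaching the two nodes adjacent to it in the sequence; - for each $k=1,\dots,m-1$, at least one of $W_{k-1}^0,W_k^0$ reaches $x_k^1$ through a 0-tip. Lengths. A two-ended 0-walk has length equal to its number of branch traversals. An extended one-ended 0-walk has length $\omega$. An extended endless 0-walk has length $\omega\cdot 2$. A two-ended 1-walk has length equal to the natural sum of the lengths of its 0-walks $W_k^0$, which has the form $\omega\cdot\tau_1+\tau_0$ with $\tau_1\ge1$. Wdistance. The wdistance $d(x,y)$ between nodes $x\ne y$ is the minimum length over all two-ended 0-walks or 1-walks terminating at $x$ and $y$; $d(x,x)=0$. 1-wconnected. $G^1$ is 1-wconnected if every two nodes (equivalently, every two branches) are joined by a 0-walk or a 1-walk, so the wdistance is always defined. *)

theory Defs
  imports Main "HOL-Library.Product_Lexorder"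
begin

text \<open>An ordinal omega*a + b (a, b natural numbers) is represented by the pair (a, b).
  The lexicographic order on nat * nat (HOL-Library.Product_Lexorder) is exactly the
  ordinal order on omega^2, and it is a well-order.\<close>

type_synonym ord2 = "nat \<times> nat"

definition natsum :: "ord2 \<Rightarrow> ord2 \<Rightarrow> ord2" (infixl "\<oplus>\<^sub>o" 65) where
  "natsum p q = (fst p + fst q, snd p + snd q)"

definition evid :: "(nat \<Rightarrow> 'v) \<Rightarrow> (nat \<Rightarrow> 'v) \<Rightarrow> bool" where
  "evid p q \<longleftrightarrow> (\<exists>i j. \<forall>k. p (i + k) = q (j + k))"

definition onepath :: "'v set set \<Rightarrow> (nat \<Rightarrow> 'v) \<Rightarrow> bool" where
  "onepath B p \<longleftrightarrow> inj p \<and> (\<forall>n. {p n, p (Suc n)} \<in> B)"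

type_synonym 'v tip = "(nat \<Rightarrow> 'v) set"

definition tips0 :: "'v set set \<Rightarrow> 'v tip set" where
  "tips0 B = {{q. onepath B q \<and> evid p q} | p. onepath B p}"

text \<open>A 1-node: a nonempty set of 0-tips together with possibly one adjoined 0-node.\<close>

type_synonym 'v node1 = "'v tip set \<times> 'v option"

datatype 'v node = N0 'v | N1 "'v node1"

record 'v graph1 =
  X0 :: "'v set"
  Br :: "'v set set"
  X1 :: "'v node1 set"

definition is_1graph :: "'v graph1 \<Rightarrow> bool" where
  "is_1graph G \<longleftrightarrow>
     (\<forall>b\<in>Br G. \<exists>u v. u \<noteq> v \<and> b = {u, v} \<and> u \<in> X0 G \<and> v \<in> X0 G) \<and>
     (\<forall>n\<in>X1 G. fst n \<noteq> {} \<and> fst n \<subseteq> tips0 (Br G) \<and> (\<forall>v. snd n = Some v \<longrightarrow> v \<in> X0 G)) \<and>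
     \<Union>(fst ` X1 G) = tips0 (Br G) \<and>
     (\<forall>n\<in>X1 G. \<forall>n'\<in>X1 G. n \<noteq> n' \<longrightarrow> fst n \<inter> fst n' = {}) \<and>
     (\<forall>n\<in>X1 G. \<forall>n'\<in>X1 G. \<forall>v. snd n = Some v \<and> snd n' = Some v \<longrightarrow> n = n')"

definition nodes :: "'v graph1 \<Rightarrow> 'v node set" where
  "nodes G = N0 ` X0 G \<union> N1 ` X1 G"

definition maximal :: "'v graph1 \<Rightarrow> 'v node \<Rightarrow> bool" where
  "maximal G x \<longleftrightarrow> x \<in> nodes G \<and>
     (case x of N0 v \<Rightarrow> (\<forall>n\<in>X1 G. snd n \<noteq> Some v) | N1 _ \<Rightarrow> True)"

text \<open>Oriented 0-walks: finite (list of 0-nodes), one-way infinite to the right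
  (starting at f 0), one-way infinite to the left (ending at f 0, f 1, f 2, ... going
  leftwards), and two-way infinite (indexed by the integers).\<close>

datatype 'v walk0 =
    Fin "'v list"
  | InfR "nat \<Rightarrow> 'v"
  | InfL "nat \<Rightarrow> 'v"
  | Both "int \<Rightarrow> 'v"

fun is_walk0 :: "'v graph1 \<Rightarrow> 'v walk0 \<Rightarrow> bool" where
  "is_walk0 G (Fin vs) \<longleftrightarrow> vs \<noteq> [] \<and> set vs \<subseteq> X0 G \<and>
      (\<forall>i. Suc i < length vs \<longrightarrow> {vs ! i, vs ! Suc i} \<in> Br G)"
| "is_walk0 G (InfR f) \<longleftrightarrow> (\<forall>n. {f n, f (Suc n)} \<in> Br G)"
| "is_walk0 G (InfL f) \<longleftrightarrow> (\<forall>n. {f n, f (Suc n)} \<in> Br G)"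
| "is_walk0 G (Both g) \<longleftrightarrow> (\<forall>n. {g n, g (n + 1)} \<in> Br G)"

fun nontrivial0 :: "'v walk0 \<Rightarrow> bool" where
  "nontrivial0 (Fin vs) \<longleftrightarrow> length vs \<ge> 2"
| "nontrivial0 _ \<longleftrightarrow> True"

fun lend :: "'v walk0 \<Rightarrow> 'v option" where
  "lend (Fin vs) = Some (hd vs)"
| "lend (InfR f) = Some (f 0)"
| "lend (InfL f) = None"
| "lend (Both g) = None"

fun rend :: "'v walk0 \<Rightarrow> 'v option" where
  "rend (Fin vs) = Some (last vs)"
| "rend (InfR f) = None"
| "rend (InfL f) = Some (f 0)"
| "rend (Both g) = None"

text \<open>The infinite side, read outwards, as a sequence (None if that side terminates).\<close>

fun ltail :: "'v walk0 \<Rightarrow> (nat \<Rightarrow> 'v) option" where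
  "ltail (InfL f) = Some f"
| "ltail (Both g) = Some (\<lambda>n. g (- int n))"
| "ltail _ = None"

fun rtail :: "'v walk0 \<Rightarrow> (nat \<Rightarrow> 'v) option" where
  "rtail (InfR f) = Some f"
| "rtail (Both g) = Some (\<lambda>n. g (int n))"
| "rtail _ = None"

definition reach_tip :: "(nat \<Rightarrow> 'v) option \<Rightarrow> 'v node \<Rightarrow> bool" where
  "reach_tip t x \<longleftrightarrow> (case (t, x) of
      (Some f, N1 n) \<Rightarrow> (\<exists>T\<in>fst n. \<exists>p\<in>T. evid f p)
    | _ \<Rightarrow> False)"

definition reach_side :: "'v option \<Rightarrow> (nat \<Rightarrow> 'v) option \<Rightarrow> 'v node \<Rightarrow> bool" where
  "reach_side e t x \<longleftrightarrow> (case x of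
      N0 v \<Rightarrow> e = Some v
    | N1 n \<Rightarrow> (\<exists>v. e = Some v \<and> snd n = Some v) \<or> reach_tip t x)"

definition reachL :: "'v walk0 \<Rightarrow> 'v node \<Rightarrow> bool" where
  "reachL W x = reach_side (lend W) (ltail W) x"

definition reachR :: "'v walk0 \<Rightarrow> 'v node \<Rightarrow> bool" where
  "reachR W x = reach_side (rend W) (rtail W) x"

fun len0 :: "'v walk0 \<Rightarrow> ord2" where
  "len0 (Fin vs) = (0, length vs - 1)"
| "len0 (InfR f) = (1, 0)"
| "len0 (InfL f) = (1, 0)"
| "len0 (Both g) = (2, 0)"

text \<open>A nontrivial two-ended 1-walk x_0, W_0, x_1, ..., W_(m-1), x_m with m \<ge> 1 is
  represented by the node list xs = [x_0, ..., x_m] and the 0-walk list ws = [W_0, ..., W_(m-1)].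
  W_k lies between x_k (on its left) and x_(k+1) (on its right).\<close>

definition is_walk1 :: "'v graph1 \<Rightarrow> 'v node list \<Rightarrow> 'v walk0 list \<Rightarrow> bool" where
  "is_walk1 G xs ws \<longleftrightarrow>
     length ws \<ge> 1 \<and> length xs = length ws + 1 \<and>
     set xs \<subseteq> nodes G \<and>
     (\<forall>k. 1 \<le> k \<and> k < length ws \<longrightarrow> (\<exists>n. xs ! k = N1 n)) \<and>
     (\<forall>k < length ws. is_walk0 G (ws ! k) \<and> nontrivial0 (ws ! k) \<and>
                     reachL (ws ! k) (xs ! k) \<and> reachR (ws ! k) (xs ! Suc k)) \<and>
     (\<forall>k. 1 \<le> k \<and> k < length ws \<longrightarrow>
          reach_tip (rtail (ws ! (k - 1))) (xs ! k) \<or> reach_tip (ltail (ws ! k)) (xs ! k))"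

definition len1 :: "'v walk0 list \<Rightarrow> ord2" where
  "len1 ws = foldr (\<lambda>W acc. len0 W \<oplus>\<^sub>o acc) ws (0, 0)"

definition wlengths :: "'v graph1 \<Rightarrow> 'v node \<Rightarrow> 'v node \<Rightarrow> ord2 set" where
  "wlengths G x y =
     {len0 (Fin vs) | vs a b. is_walk0 G (Fin vs) \<and> x = N0 a \<and> y = N0 b \<and>
                             {hd vs, last vs} = {a, b}}
   \<union> {len1 ws | xs ws. is_walk1 G xs ws \<and> {hd xs, last xs} = {x, y}}"

definition wdist :: "'v graph1 \<Rightarrow> 'v node \<Rightarrow> 'v node \<Rightarrow> ord2" where
  "wdist G x y = (if x = y then (0, 0) else (LEAST l. l \<in> wlengths G x y))"

definition wconnected1 :: "'v graph1 \<Rightarrow> bool" where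
  "wconnected1 G \<longleftrightarrow> (\<forall>x\<in>nodes G. \<forall>y\<in>nodes G. x \<noteq> y \<longrightarrow> wlengths G x y \<noteq> {})"

end

(*
  The wdistance of x and y is the least element of a set of ordinals below omega^2,
  and that set does not change when x and y are swapped, because a 1-walk can be
  reversed. Every such walk contains a nontrivial 0-walk, so its length is nonzero.

  For the triangle inequality, concatenate a shortest walk from x to y with a shortest
  walk from y to z. If one of the two 0-walks meeting at y reaches y through a 0-tip,
  the concatenation is already a 1-walk, and its length is the natural sum of the two
  lengths. Otherwise both reach y through the same 0-node v (y itself, or the 0-node
  adjoined to the 1-node y), and the two 0-walks are merged at v into one 0-walk. The
  merged walk keeps the outer ends of the two walks. Its length is at most the natural
  sum of theirs: finite lengths add up, and if a side is infinite the merged length is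
  omega or omega*2.
*)
theory Submission
  imports Defs "HOL-Library.Omega_Words_Fun"
begin

section \<open>The natural sum on ordinals below omega^2\<close>

interpretation natsum: comm_monoid natsum "(0, 0)"
  by unfold_locales (auto simp: natsum_def)

lemma natsum_eq_0_iff: "p \<oplus>\<^sub>o q = (0, 0) \<longleftrightarrow> p = (0, 0) \<and> q = (0, 0)"
  by (cases p; cases q) (auto simp: natsum_def)

lemma natsum_right_mono: "p \<le> q \<Longrightarrow> p \<oplus>\<^sub>o r \<le> q \<oplus>\<^sub>o r"
  by (cases p; cases q) (auto simp: natsum_def)

lemma zero_le_ord2 [simp]: "(0, 0) \<le> (p :: ord2)"
  by (cases p) simp

section \<open>Reversing and merging 0-walks\<close>

abbreviation adj :: "'v graph1 \<Rightarrow> 'v \<Rightarrow> 'v \<Rightarrow> bool" where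
  "adj G u v \<equiv> {u, v} \<in> Br G"

lemma is_walk0_Fin_iff:
  "is_walk0 G (Fin vs) \<longleftrightarrow> vs \<noteq> [] \<and> set vs \<subseteq> X0 G \<and> successively (adj G) vs"
  by (simp add: successively_conv_nth)

lemma successively_adj_swap [simp]:
  "successively (\<lambda>u v. adj G v u) vs = successively (adj G) vs"
  by (intro successively_cong) (auto simp: insert_commute)

lemma chain_build_iff:
  "(\<forall>n. R ((a ## w) n) ((a ## w) (Suc n))) \<longleftrightarrow> R a (w 0) \<and> (\<forall>n. R (w n) (w (Suc n)))"
proof
  assume chain: "\<forall>n. R ((a ## w) n) ((a ## w) (Suc n))"
  show "R a (w 0) \<and> (\<forall>n. R (w n) (w (Suc n)))"
    using chain[rule_format, of 0] chain[rule_format, of "Suc n" for n] by simp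
next
  assume "R a (w 0) \<and> (\<forall>n. R (w n) (w (Suc n)))"
  then show "\<forall>n. R ((a ## w) n) ((a ## w) (Suc n))"
  proof (intro allI)
    fix n
    show "R ((a ## w) n) ((a ## w) (Suc n))" using \<open>R a (w 0) \<and> _\<close> by (cases n) simp_all
  qed
qed

lemma chain_conc_iff:
  "(\<forall>n. R ((xs \<frown> f) n) ((xs \<frown> f) (Suc n))) \<longleftrightarrow>
     successively R (xs @ [f 0]) \<and> (\<forall>n. R (f n) (f (Suc n)))"
proof (induction xs)
  case (Cons x xs)
  have "(\<forall>n. R (((x # xs) \<frown> f) n) (((x # xs) \<frown> f) (Suc n))) \<longleftrightarrow>
        R x ((xs \<frown> f) 0) \<and> (\<forall>n. R ((xs \<frown> f) n) ((xs \<frown> f) (Suc n)))"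
    unfolding build_cons by (rule chain_build_iff)
  also have "\<dots> \<longleftrightarrow> successively R ((x # xs) @ [f 0]) \<and> (\<forall>n. R (f n) (f (Suc n)))"
    using Cons.IH by (cases xs) (auto simp: successively_Cons)
  finally show ?case .
qed simp

lemma chain_int_iff:
  "(\<forall>i::int. R (g i) (g (i + 1))) \<longleftrightarrow>
     (\<forall>n. R (g (int n)) (g (int (Suc n)))) \<and> (\<forall>n. R (g (- int (Suc n))) (g (- int n)))"
proof (intro iffI conjI allI)
  fix i :: int
  assume halves: "(\<forall>n. R (g (int n)) (g (int (Suc n)))) \<and> (\<forall>n. R (g (- int (Suc n))) (g (- int n)))"
  show "R (g i) (g (i + 1))"
  proof (cases i rule: int_cases)
    case (neg n)
    have "- int (Suc n) + 1 = - int n" by simp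
    with neg halves show ?thesis by (simp only:)
  qed (use halves in \<open>simp add: add.commute\<close>)
next
  fix n
  assume "\<forall>i. R (g i) (g (i + 1))"
  from this[rule_format, of "- int (Suc n)"] show "R (g (- int (Suc n))) (g (- int n))" by simp
next
  fix n
  assume "\<forall>i. R (g i) (g (i + 1))"
  from this[rule_format, of "int n"] show "R (g (int n)) (g (int (Suc n)))" by (simp add: add.commute)
qed

fun rev0 :: "'v walk0 \<Rightarrow> 'v walk0" where
  "rev0 (Fin vs) = Fin (rev vs)"
| "rev0 (InfR f) = InfL f"
| "rev0 (InfL f) = InfR f"
| "rev0 (Both g) = Both (\<lambda>i. g (- i))"

lemma rev0_simps [simp]:
  "lend (rev0 W) = rend W" "rend (rev0 W) = lend W"
  "ltail (rev0 W) = rtail W" "rtail (rev0 W) = ltail W"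
  "nontrivial0 (rev0 W) = nontrivial0 W" "len0 (rev0 W) = len0 W"
  by (cases W; simp add: hd_rev last_rev)+

lemma reach_rev0 [simp]: "reachL (rev0 W) x = reachR W x" "reachR (rev0 W) x = reachL W x"
  by (simp_all add: reachL_def reachR_def)

lemma is_walk0_rev0 [simp]: "is_walk0 G (rev0 W) = is_walk0 G W"
proof (cases W)
  case (Fin vs)
  then show ?thesis by (auto simp: is_walk0_Fin_iff simp del: is_walk0.simps(1))
next
  case (Both g)
  have "(\<forall>i. adj G (g (- i)) (g (- (i + 1)))) \<longleftrightarrow> (\<forall>i. adj G (g i) (g (i + 1)))"
    by (subst (1 2) chain_int_iff) (auto simp: insert_commute)
  with Both show ?thesis by simp
qed simp_all

lemma reach_tip_N1: "reach_tip t x \<Longrightarrow> \<exists>n. x = N1 n"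
  by (cases t; cases x) (auto simp: reach_tip_def)

lemma reach_tip_conc: "reach_tip (Some f) x \<Longrightarrow> reach_tip (Some (xs \<frown> f)) x"
proof -
  have "evid (xs \<frown> f) p" if "evid f p" for p
  proof -
    from that obtain i j where "\<forall>k. f (i + k) = p (j + k)" by (auto simp: evid_def)
    then have "\<forall>k. (xs \<frown> f) ((length xs + i) + k) = p (j + k)" by simp
    then show ?thesis unfolding evid_def by blast
  qed
  then show "reach_tip (Some f) x \<Longrightarrow> reach_tip (Some (xs \<frown> f)) x"
    by (cases x) (auto simp: reach_tip_def)
qed

definition left_subsumes :: "'v walk0 \<Rightarrow> 'v walk0 \<Rightarrow> bool" where
  "left_subsumes M W \<longleftrightarrow>
     lend M = lend W \<and> (\<forall>x. reach_tip (ltail W) x \<longrightarrow> reach_tip (ltail M) x)"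

definition right_subsumes :: "'v walk0 \<Rightarrow> 'v walk0 \<Rightarrow> bool" where
  "right_subsumes M W \<longleftrightarrow>
     rend M = rend W \<and> (\<forall>x. reach_tip (rtail W) x \<longrightarrow> reach_tip (rtail M) x)"

lemma reachL_left_subsumes: "left_subsumes M W \<Longrightarrow> reachL W x \<Longrightarrow> reachL M x"
  by (cases x) (auto simp: left_subsumes_def reachL_def reach_side_def)

lemma reachR_right_subsumes: "right_subsumes M W \<Longrightarrow> reachR W x \<Longrightarrow> reachR M x"
  by (cases x) (auto simp: right_subsumes_def reachR_def reach_side_def)

text \<open>Merging at a common terminal 0-node. A left-infinite walk InfL f is read outwards
  from its terminal node f 0, hence the reversal of b. The last equation only covers pairs
  that cannot share a terminal 0-node.\<close>

fun join0 :: "'v walk0 \<Rightarrow> 'v walk0 \<Rightarrow> 'v walk0" where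
  "join0 (Fin a) (Fin b) = Fin (a @ tl b)"
| "join0 (Fin a) (InfR f) = InfR (butlast a \<frown> f)"
| "join0 (InfL f) (Fin b) = InfL (butlast (rev b) \<frown> f)"
| "join0 (InfL f) (InfR h) = Both (\<lambda>i. if 0 \<le> i then h (nat i) else f (nat (- i)))"
| "join0 W1 W2 = W1"

lemma is_walk0_Fin_join:
  assumes "is_walk0 G (Fin a)" "is_walk0 G (Fin b)" "last a = hd b"
  shows "is_walk0 G (Fin (a @ tl b))"
proof -
  obtain u bs where "b = u # bs" using assms(2) by (cases b) auto
  with assms show ?thesis
    unfolding is_walk0_Fin_iff by (auto simp: successively_append_iff successively_Cons)
qed

lemma is_walk0_InfR_join:
  assumes "is_walk0 G (Fin a)" "is_walk0 G (InfR f)" "last a = f 0"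
  shows "is_walk0 G (InfR (butlast a \<frown> f))"
proof -
  have "a \<noteq> []" using assms(1) by simp
  then have "butlast a @ [f 0] = a" using assms(3) by (metis append_butlast_last_id)
  with assms show ?thesis
    unfolding is_walk0.simps(2) chain_conc_iff[of "adj G"] is_walk0_Fin_iff by simp
qed

lemma is_walk0_Both_join:
  assumes "is_walk0 G (InfL f)" "is_walk0 G (InfR h)" "f 0 = h 0"
  shows "is_walk0 G (Both (\<lambda>i. if 0 \<le> i then h (nat i) else f (nat (- i))))"
    (is "is_walk0 G (Both ?g)")
proof -
  have g_neg: "?g (- int n) = f n" for n
    using assms(3) by (cases "n = 0") auto
  have "\<forall>n. adj G (?g (int n)) (?g (int (Suc n)))"
    using assms(2) by (simp add: nat_add_distrib)
  moreover have "\<forall>n. adj G (?g (- int (Suc n))) (?g (- int n))"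
    using assms(1) by (simp only: g_neg) (simp add: insert_commute)
  ultimately show ?thesis unfolding is_walk0.simps chain_int_iff[of "adj G" ?g] by blast
qed

context
  fixes G :: "'v graph1" and W1 W2 :: "'v walk0" and v :: 'v
  assumes walks: "is_walk0 G W1" "is_walk0 G W2"
    and nontrivial: "nontrivial0 W1" "nontrivial0 W2"
    and meet: "rend W1 = Some v" "lend W2 = Some v"
begin

lemma join0_cases:
  obtains (FinFin) a b where "W1 = Fin a" "W2 = Fin b"
  | (FinR) a f where "W1 = Fin a" "W2 = InfR f"
  | (LFin) f b where "W1 = InfL f" "W2 = Fin b"
  | (LR) f h where "W1 = InfL f" "W2 = InfR h"
  using meet by (cases W1; cases W2) auto

lemma is_walk0_join0: "is_walk0 G (join0 W1 W2)"
proof (cases rule: join0_cases)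
  case (FinFin a b)
  then show ?thesis using walks meet is_walk0_Fin_join[of G a b] by simp
next
  case (FinR a f)
  then show ?thesis using walks meet is_walk0_InfR_join[of G a f] by simp
next
  case (LFin f b)
  have "is_walk0 G (InfR (butlast (rev b) \<frown> f))"
  proof (rule is_walk0_InfR_join)
    show "is_walk0 G (Fin (rev b))" using walks(2) LFin is_walk0_rev0[of G W2] by simp
  qed (use walks meet LFin in \<open>simp_all add: last_rev\<close>)
  with LFin show ?thesis by simp
next
  case (LR f h)
  then have "is_walk0 G (InfL f)" "is_walk0 G (InfR h)" "f 0 = h 0" using walks meet by simp_all
  then show ?thesis unfolding LR join0.simps by (rule is_walk0_Both_join)
qed

lemma nontrivial0_join0: "nontrivial0 (join0 W1 W2)"
  using nontrivial by (cases rule: join0_cases) auto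

lemma join0_subsumes: "left_subsumes (join0 W1 W2) W1 \<and> right_subsumes (join0 W1 W2) W2"
proof (cases rule: join0_cases)
  case (FinFin a b)
  then have "a \<noteq> []" "tl b \<noteq> []" using nontrivial by (auto simp: tl_Nil)
  with FinFin show ?thesis by (simp add: left_subsumes_def right_subsumes_def last_tl)
next
  case (FinR a f)
  then have "butlast a \<noteq> []" using nontrivial by (auto simp flip: length_greater_0_conv)
  then have "(butlast a \<frown> f) 0 = hd a" by (cases a) (auto split: if_splits)
  with FinR show ?thesis by (simp add: left_subsumes_def right_subsumes_def reach_tip_conc)
next
  case (LFin f b)
  then have "tl b \<noteq> []" using nontrivial by (auto simp: tl_Nil)
  then have "(rev (tl b) \<frown> f) 0 = last b"
    by (metis conc_fst hd_conv_nth hd_rev last_tl length_greater_0_conv rev_is_Nil_conv)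
  with LFin show ?thesis by (simp add: left_subsumes_def right_subsumes_def reach_tip_conc)
next
  case (LR f h)
  have "f 0 = h 0" using meet LR by simp
  then have "(\<lambda>n. if 0 \<le> - int n then h (nat (- int n)) else f (nat (- (- int n)))) = f"
    by (auto simp: fun_eq_iff)
  with LR show ?thesis by (simp add: left_subsumes_def right_subsumes_def)
qed

lemma len0_join0_le: "len0 (join0 W1 W2) \<le> len0 W1 \<oplus>\<^sub>o len0 W2"
  using nontrivial by (cases rule: join0_cases) (auto simp: natsum_def)

end

section \<open>1-walks\<close>

definition segment :: "'v graph1 \<Rightarrow> 'v node \<Rightarrow> 'v walk0 \<Rightarrow> 'v node \<Rightarrow> bool" where
  "segment G x W y \<longleftrightarrow> is_walk0 G W \<and> nontrivial0 W \<and> reachL W x \<and> reachR W y"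

definition tip_junction :: "'v walk0 \<Rightarrow> 'v node \<Rightarrow> 'v walk0 \<Rightarrow> bool" where
  "tip_junction W y W' \<longleftrightarrow> reach_tip (rtail W) y \<or> reach_tip (ltail W') y"

lemma segment_rev0 [simp]: "segment G y (rev0 W) x = segment G x W y"
  by (auto simp: segment_def)

lemma tip_junction_rev0 [simp]: "tip_junction (rev0 W') y (rev0 W) = tip_junction W y W'"
  by (auto simp: tip_junction_def)

lemma is_walk1_iff:
  "is_walk1 G xs ws \<longleftrightarrow> ws \<noteq> [] \<and> length xs = Suc (length ws) \<and> set xs \<subseteq> nodes G \<and>
     (\<forall>k<length ws. segment G (xs ! k) (ws ! k) (xs ! Suc k)) \<and>
     (\<forall>k. Suc k < length ws \<longrightarrow> tip_junction (ws ! k) (xs ! Suc k) (ws ! Suc k))"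
proof -
  have shift: "(\<forall>k. 1 \<le> k \<and> k < n \<longrightarrow> P k) \<longleftrightarrow> (\<forall>k. Suc k < n \<longrightarrow> P (Suc k))"
    for n and P :: "nat \<Rightarrow> bool"
    by (auto simp: Suc_le_eq gr0_conv_Suc)
  txt \<open>The requirement that interior nodes be 1-nodes is implied by the tip junctions.\<close>
  have "tip_junction W x W' \<Longrightarrow> \<exists>n. x = N1 n" for W W' :: "'v walk0" and x
    unfolding tip_junction_def using reach_tip_N1 by blast
  then show ?thesis
    unfolding is_walk1_def segment_def shift by (simp add: Suc_le_eq tip_junction_def) blast
qed

lemma is_walk1_single:
  "is_walk1 G [x, y] [W] \<longleftrightarrow> x \<in> nodes G \<and> y \<in> nodes G \<and> segment G x W y"
  by (simp add: is_walk1_iff)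

lemma is_walk1_Cons:
  assumes "ws \<noteq> []"
  shows "is_walk1 G (x # xs) (W # ws) \<longleftrightarrow>
    x \<in> nodes G \<and> segment G x W (hd xs) \<and> tip_junction W (hd xs) (hd ws) \<and> is_walk1 G xs ws"
proof -
  obtain w ws' where ws: "ws = w # ws'" using assms by (cases ws) auto
  show ?thesis
    unfolding is_walk1_iff ws by (cases xs) (simp_all add: All_less_Suc2 conj_comms)
qed

lemma is_walk1_nodes: "is_walk1 G xs ws \<Longrightarrow> set xs \<subseteq> nodes G"
  by (simp add: is_walk1_def)

lemma is_walk1_append_iff:
  assumes "length xs1 = length ws1" "ws1 \<noteq> []" "ws2 \<noteq> []"
  shows "is_walk1 G (xs1 @ y # xs2) (ws1 @ ws2) \<longleftrightarrow>
    is_walk1 G (xs1 @ [y]) ws1 \<and> is_walk1 G (y # xs2) ws2 \<and> tip_junction (last ws1) y (hd ws2)"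
  using assms
proof (induction ws1 arbitrary: xs1)
  case (Cons W ws1)
  then obtain x xs1' where xs1: "xs1 = x # xs1'" and len: "length xs1' = length ws1"
    by (cases xs1) auto
  show ?case
  proof (cases "ws1 = []")
    case True
    with len xs1 \<open>ws2 \<noteq> []\<close> show ?thesis
      by (auto simp: is_walk1_Cons is_walk1_single dest: is_walk1_nodes)
  next
    case False
    with len have "xs1' \<noteq> []" by auto
    with False xs1 Cons.prems show ?thesis
      by (simp add: is_walk1_Cons Cons.IH[OF len False] conj_comms)
  qed
qed simp

lemma is_walk1_first_segment: "is_walk1 G (x # xs) (W # ws) \<Longrightarrow> segment G x W (hd xs)"
  by (cases xs) (auto simp: is_walk1_iff)

lemma is_walk1_last_segment:
  assumes "is_walk1 G (xs @ [u, y]) (ws @ [W])" "length xs = length ws"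
  shows "segment G u W y"
proof -
  have "\<forall>k<length (ws @ [W]). segment G ((xs @ [u, y]) ! k) ((ws @ [W]) ! k) ((xs @ [u, y]) ! Suc k)"
    using assms(1) unfolding is_walk1_iff by blast
  from this[rule_format, of "length ws"] assms(2) show ?thesis by (simp add: nth_append)
qed

lemma is_walk1_rev: "is_walk1 G xs ws \<Longrightarrow> is_walk1 G (rev xs) (rev (map rev0 ws))"
proof (induction ws arbitrary: xs)
  case (Cons W ws)
  then have "length xs = Suc (Suc (length ws))" by (simp add: is_walk1_iff)
  then obtain x u us where xs: "xs = x # u # us" and len: "length us = length ws"
    by (metis length_Suc_conv)
  show ?case
  proof (cases "ws = []")
    case True
    with Cons.prems xs len show ?thesis by (simp add: is_walk1_single)
  next
    case False
    with Cons.prems xs have "x \<in> nodes G" "segment G x W u" "tip_junction W u (hd ws)"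
      and rest: "is_walk1 G (u # us) ws"
      by (simp_all add: is_walk1_Cons)
    moreover have "u \<in> nodes G" using is_walk1_nodes[OF rest] by simp
    moreover have "last (rev (map rev0 ws)) = rev0 (hd ws)" using False by (simp add: last_rev hd_map)
    ultimately have "is_walk1 G (rev us @ u # [x]) (rev (map rev0 ws) @ [rev0 W])"
      using Cons.IH[OF rest] False len by (simp add: is_walk1_append_iff is_walk1_single)
    with xs show ?thesis by simp
  qed
qed (simp add: is_walk1_def)

lemma tip_junction_left_subsumes:
  "left_subsumes M W \<Longrightarrow> tip_junction W0 y W \<Longrightarrow> tip_junction W0 y M"
  by (auto simp: left_subsumes_def tip_junction_def)

lemma tip_junction_right_subsumes:
  "right_subsumes M W \<Longrightarrow> tip_junction W y W' \<Longrightarrow> tip_junction M y W'"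
  by (auto simp: right_subsumes_def tip_junction_def)

lemma is_walk1_replace_hd:
  assumes "is_walk1 G (y # xs) (W # ws)" "x \<in> nodes G"
    and "segment G x M (hd xs)" "right_subsumes M W"
  shows "is_walk1 G (x # xs) (M # ws)"
proof (cases "ws = []")
  case True
  with assms(1) obtain z where "xs = [z]" "z \<in> nodes G" by (auto simp: is_walk1_iff length_Suc_conv)
  with True assms(2,3) show ?thesis by (simp add: is_walk1_single)
next
  case False
  with assms show ?thesis by (auto simp: is_walk1_Cons intro: tip_junction_right_subsumes)
qed

lemma segment_join0:
  assumes "segment G u W1 y" "segment G y W2 z" "rend W1 = Some v" "lend W2 = Some v"
  shows "segment G u (join0 W1 W2) z"
    and "left_subsumes (join0 W1 W2) W1" "right_subsumes (join0 W1 W2) W2"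
proof -
  have "is_walk0 G W1" "is_walk0 G W2" "nontrivial0 W1" "nontrivial0 W2"
    using assms(1,2) by (simp_all add: segment_def)
  note join = is_walk0_join0[OF this assms(3,4)] nontrivial0_join0[OF this assms(3,4)]
    join0_subsumes[OF this assms(3,4)]
  with assms(1,2) show "segment G u (join0 W1 W2) z"
    by (auto simp: segment_def intro: reachL_left_subsumes reachR_right_subsumes)
  from join show "left_subsumes (join0 W1 W2) W1" "right_subsumes (join0 W1 W2) W2" by simp_all
qed

lemma is_walk1_join_at_node:
  assumes w1: "is_walk1 G (xs1 @ [u, y]) (ws1 @ [W1])" and w2: "is_walk1 G (y # xs2) (W2 # ws2)"
    and len: "length xs1 = length ws1"
    and meet: "rend W1 = Some v" "lend W2 = Some v"
  shows "is_walk1 G (xs1 @ u # xs2) (ws1 @ join0 W1 W2 # ws2)"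
proof -
  let ?M = "join0 W1 W2"
  have M: "segment G u ?M (hd xs2)" "left_subsumes ?M W1" "right_subsumes ?M W2"
    using segment_join0[OF is_walk1_last_segment[OF w1 len] is_walk1_first_segment[OF w2] meet] .
  have "u \<in> nodes G" using is_walk1_nodes[OF w1] by simp
  then have tail: "is_walk1 G (u # xs2) (?M # ws2)" by (rule is_walk1_replace_hd[OF w2 _ M(1,3)])
  show ?thesis
  proof (cases "ws1 = []")
    case True
    with len tail show ?thesis by simp
  next
    case False
    with w1 len have "is_walk1 G (xs1 @ [u]) ws1" "tip_junction (last ws1) u W1"
      using is_walk1_append_iff[of xs1 ws1 "[W1]" G u "[y]"] by simp_all
    with False len tail M(2) show ?thesis
      by (simp add: is_walk1_append_iff tip_junction_left_subsumes)
  qed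
qed

lemma len1_Nil [simp]: "len1 [] = (0, 0)"
  by (simp add: len1_def)

lemma len1_Cons [simp]: "len1 (W # ws) = len0 W \<oplus>\<^sub>o len1 ws"
  by (simp add: len1_def)

lemma len1_append: "len1 (ws1 @ ws2) = len1 ws1 \<oplus>\<^sub>o len1 ws2"
  by (induction ws1) (simp_all add: natsum.assoc)

lemma len1_rev_map_rev0 [simp]: "len1 (rev (map rev0 ws)) = len1 ws"
  by (induction ws) (simp_all add: len1_append natsum.commute)

lemma len1_replace_le:
  assumes "len0 M \<le> len0 W1 \<oplus>\<^sub>o len0 W2"
  shows "len1 (ws1 @ M # ws2) \<le> len1 (ws1 @ [W1]) \<oplus>\<^sub>o len1 (W2 # ws2)"
proof -
  have "len1 (ws1 @ M # ws2) = len0 M \<oplus>\<^sub>o (len1 ws1 \<oplus>\<^sub>o len1 ws2)"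
    by (simp add: len1_append ac_simps)
  also have "\<dots> \<le> (len0 W1 \<oplus>\<^sub>o len0 W2) \<oplus>\<^sub>o (len1 ws1 \<oplus>\<^sub>o len1 ws2)"
    using assms by (rule natsum_right_mono)
  also have "\<dots> = len1 (ws1 @ [W1]) \<oplus>\<^sub>o len1 (W2 # ws2)"
    by (simp add: len1_append ac_simps)
  finally show ?thesis .
qed

lemma is_walk1_snoc_cases:
  assumes "is_walk1 G xs ws"
  obtains pre u ws' W where "xs = pre @ [u, last xs]" "ws = ws' @ [W]" "length pre = length ws'"
proof -
  have len: "length xs = Suc (length ws)" "ws \<noteq> []" using assms by (simp_all add: is_walk1_iff)
  obtain ws' W where ws: "ws = ws' @ [W]" using len(2) by (cases ws rule: rev_cases) simp_all
  obtain xs' y where xs: "xs = xs' @ [y]" using len(1) by (cases xs rule: rev_cases) simp_all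
  obtain pre u where "xs' = pre @ [u]" using len(1) xs ws by (cases xs' rule: rev_cases) simp_all
  with xs ws len(1) show ?thesis using that[of pre u ws' W] by simp
qed

lemma is_walk1_Cons_cases:
  assumes "is_walk1 G xs ws"
  obtains W ws' post where "xs = hd xs # post" "ws = W # ws'"
proof -
  have "length xs = Suc (length ws)" "ws \<noteq> []" using assms by (simp_all add: is_walk1_iff)
  with that show ?thesis by (metis list.collapse list.size(3) nat.distinct(1))
qed

lemma common_node_if_no_tip_junction:
  assumes "reachR W y" "reachL W' y" "\<not> tip_junction W y W'"
  obtains v where "rend W = Some v" "lend W' = Some v"
  using assms by (cases y) (auto simp: reachR_def reachL_def reach_side_def tip_junction_def)

lemma is_walk1_join_at_tip:
  assumes "is_walk1 G (xs1 @ [u, y]) (ws1 @ [W1])" "is_walk1 G (y # xs2) (W2 # ws2)"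
    and "length xs1 = length ws1" "tip_junction W1 y W2"
  shows "is_walk1 G (xs1 @ u # y # xs2) (ws1 @ W1 # W2 # ws2)"
  using is_walk1_append_iff[of "xs1 @ [u]" "ws1 @ [W1]" "W2 # ws2" G y xs2] assms by simp

lemma is_walk1_concat:
  assumes w1: "is_walk1 G xs1 ws1" and w2: "is_walk1 G xs2 ws2" and y: "last xs1 = hd xs2"
  obtains xs ws where "is_walk1 G xs ws" "hd xs = hd xs1" "last xs = last xs2"
    "len1 ws \<le> len1 ws1 \<oplus>\<^sub>o len1 ws2"
proof -
  obtain pre u ws1' W1 where xs1: "xs1 = pre @ [u, hd xs2]" and ws1: "ws1 = ws1' @ [W1]"
    and len: "length pre = length ws1'"
    using is_walk1_snoc_cases[OF w1] y by metis
  obtain W2 ws2' post where xs2: "xs2 = hd xs2 # post" and ws2: "ws2 = W2 # ws2'"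
    using is_walk1_Cons_cases[OF w2] .
  have w1': "is_walk1 G (pre @ [u, hd xs2]) (ws1' @ [W1])"
    and w2': "is_walk1 G (hd xs2 # post) (W2 # ws2')"
    using w1 w2 xs1 ws1 xs2 ws2 by simp_all
  have "length post = Suc (length ws2')" using w2' by (simp add: is_walk1_iff)
  then have post: "post \<noteq> []" by auto
  have last_xs2: "last xs2 = last post" using xs2 post by (metis last_ConsR)
  have ends: "hd (pre @ u # zs) = hd xs1" "last (pre @ u # zs @ post) = last xs2" for zs
    by (cases pre) (simp_all add: xs1 post last_xs2)
  show ?thesis
  proof (cases "tip_junction W1 (hd xs2) W2")
    case True
    from is_walk1_join_at_tip[OF w1' w2' len True] show ?thesis
      by (rule that)
        (use ends(1) ends(2)[of "[hd xs2]"] in \<open>simp_all add: ws1 ws2 len1_append natsum.assoc\<close>)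
  next
    case False
    have seg1: "segment G u W1 (hd xs2)" and seg2: "segment G (hd xs2) W2 (hd post)"
      using is_walk1_last_segment[OF w1' len] is_walk1_first_segment[OF w2'] .
    with False obtain v where meet: "rend W1 = Some v" "lend W2 = Some v"
      by (auto simp: segment_def elim: common_node_if_no_tip_junction)
    have join_le: "len0 (join0 W1 W2) \<le> len0 W1 \<oplus>\<^sub>o len0 W2"
      using len0_join0_le[of G W1 W2 v] seg1 seg2 meet by (simp add: segment_def)
    from is_walk1_join_at_node[OF w1' w2' len meet] show ?thesis
      by (rule that)
        (use ends(1) ends(2)[of "[]"] len1_replace_le[OF join_le] in \<open>simp_all add: ws1 ws2\<close>)
  qed
qed

section \<open>Wdistance\<close>

lemma len0_nonzero: "nontrivial0 W \<Longrightarrow> len0 W \<noteq> (0, 0)"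
  by (cases W) auto

lemma len1_nonzero:
  assumes "is_walk1 G xs ws"
  shows "len1 ws \<noteq> (0, 0)"
proof -
  obtain W ws' post where "xs = hd xs # post" "ws = W # ws'" using is_walk1_Cons_cases[OF assms] .
  moreover from this have "segment G (hd xs) W (hd post)" using is_walk1_first_segment assms by metis
  ultimately show ?thesis by (simp add: segment_def natsum_eq_0_iff len0_nonzero)
qed

lemma is_walk1_Fin:
  assumes "is_walk0 G (Fin vs)" "hd vs \<noteq> last vs"
  shows "is_walk1 G [N0 (hd vs), N0 (last vs)] [Fin vs]"
proof -
  have "vs \<noteq> []" "set vs \<subseteq> X0 G" using assms(1) by simp_all
  then have "hd vs \<in> X0 G" "last vs \<in> X0 G" by auto
  then have "N0 (hd vs) \<in> nodes G" "N0 (last vs) \<in> nodes G" by (simp_all add: nodes_def)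
  moreover have "2 \<le> length vs" using assms(2) \<open>vs \<noteq> []\<close> by (cases vs; cases "tl vs") auto
  ultimately show ?thesis
    using assms(1) by (simp add: is_walk1_single segment_def reachL_def reachR_def reach_side_def)
qed

lemma wlengths_commute: "wlengths G x y = wlengths G y x"
  by (auto simp: wlengths_def insert_commute)

lemma len1_in_wlengths: "is_walk1 G xs ws \<Longrightarrow> len1 ws \<in> wlengths G (hd xs) (last xs)"
  by (auto simp: wlengths_def)

lemma wlengths_walk1:
  assumes "l \<in> wlengths G x y" "x \<noteq> y"
  obtains xs ws where "is_walk1 G xs ws" "hd xs = x" "last xs = y" "len1 ws = l"
proof -
  have "\<exists>xs ws. is_walk1 G xs ws \<and> {hd xs, last xs} = {x, y} \<and> len1 ws = l"
    using assms(1) unfolding wlengths_def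
  proof (elim UnE CollectE exE conjE)
    fix vs a b
    assume "l = len0 (Fin vs)" "is_walk0 G (Fin vs)" "x = N0 a" "y = N0 b" "{hd vs, last vs} = {a, b}"
    moreover from this assms(2) have "hd vs \<noteq> last vs" by auto
    ultimately show ?thesis using is_walk1_Fin[of G vs] by fastforce
  qed blast
  then obtain xs ws where w: "is_walk1 G xs ws" "{hd xs, last xs} = {x, y}" "len1 ws = l" by blast
  with assms(2) consider "hd xs = x" "last xs = y" | "hd xs = y" "last xs = x"
    by (auto simp: doubleton_eq_iff)
  then show ?thesis
  proof cases
    case 2
    with w that[OF is_walk1_rev[OF w(1)]] show ?thesis by (simp add: hd_rev last_rev)
  qed (use w that in blast)
qed

lemma wdist_self [simp]: "wdist G x x = (0, 0)"
  by (simp add: wdist_def)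

lemma wdist_commute: "wdist G x y = wdist G y x"
  by (simp add: wdist_def wlengths_commute eq_commute)

lemma wdist_minimal:
  assumes "wlengths G x y \<noteq> {}" "x \<noteq> y"
  shows "wdist G x y \<in> wlengths G x y \<and> (\<forall>l\<in>wlengths G x y. wdist G x y \<le> l)"
  using assms by (auto simp: wdist_def intro: LeastI_ex Least_le)

lemma wdist_nonzero:
  assumes "wlengths G x y \<noteq> {}" "x \<noteq> y"
  shows "wdist G x y \<noteq> (0, 0)"
proof -
  obtain xs ws where "is_walk1 G xs ws" "len1 ws = wdist G x y"
    using wdist_minimal[OF assms] assms(2) by (metis wlengths_walk1)
  then show ?thesis using len1_nonzero by metis
qed

lemma wdist_triangle:
  assumes "wconnected1 G" "x \<in> nodes G" "y \<in> nodes G" "z \<in> nodes G"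
  shows "wdist G x z \<le> wdist G x y \<oplus>\<^sub>o wdist G y z"
proof (cases "x = y \<or> y = z \<or> x = z")
  case True
  then show ?thesis by (elim disjE) simp_all
next
  case False
  then have "wlengths G x y \<noteq> {}" "wlengths G y z \<noteq> {}" "wlengths G x z \<noteq> {}"
    using assms by (auto simp: wconnected1_def)
  with False obtain xs1 ws1 xs2 ws2 where
    w1: "is_walk1 G xs1 ws1" "hd xs1 = x" "last xs1 = y" "len1 ws1 = wdist G x y" and
    w2: "is_walk1 G xs2 ws2" "hd xs2 = y" "last xs2 = z" "len1 ws2 = wdist G y z"
    using wdist_minimal wlengths_walk1 by metis
  then obtain xs ws where w: "is_walk1 G xs ws" "hd xs = x" "last xs = z"
    "len1 ws \<le> wdist G x y \<oplus>\<^sub>o wdist G y z"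
    by (metis is_walk1_concat)
  then have "wdist G x z \<le> len1 ws"
    using wdist_minimal[OF \<open>wlengths G x z \<noteq> {}\<close>] False len1_in_wlengths by metis
  from this w(4) show ?thesis by (rule order_trans)
qed

theorem lemma7p1:
  fixes G :: "'v graph1"
  assumes "is_1graph G" and "wconnected1 G"
    and "maximal G x" and "maximal G y" and "maximal G z"
  shows "(x \<noteq> y \<longrightarrow> wdist G x y \<in> wlengths G x y \<and> (\<forall>l\<in>wlengths G x y. wdist G x y \<le> l))
     \<and> (wdist G x y = (0, 0) \<longleftrightarrow> x = y)
     \<and> wdist G x y = wdist G y x
     \<and> wdist G x z \<le> wdist G x y \<oplus>\<^sub>o wdist G y z"
proof -
  have nodes: "x \<in> nodes G" "y \<in> nodes G" "z \<in> nodes G"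
    using assms(3-5) by (simp_all add: maximal_def)
  then have "x \<noteq> y \<Longrightarrow> wlengths G x y \<noteq> {}"
    using assms(2) by (simp add: wconnected1_def)
  then show ?thesis
    using wdist_minimal wdist_nonzero wdist_commute wdist_triangle[OF assms(2) nodes] by fastforce
qed

end
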